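(* Let $\mathcal{F}$ be a family of finite lattices (considered up to isomorphism) that is closed under vertical sum and contains the singleton lattice. Let $f(n)$ and $f_{\mathrm{vi}}(n)$ be the numbers of $n$-element lattices and $n$-element vertically indecomposable lattices in $\mathcal{F}$, respectively. Let $N \ge 2$ be an integer, and let $\underline{f} \colon \mathbb{N}^+ \to \mathbb{N}^+$ be the sequence defined by $\underline{f}(1)=1$, \[ \underline{f}(n) = \sum_{k=2}^n f_{\mathrm{vi}}(k)\, \underline{f}(n-k+1) \quad \text{for } n=2,3,\ldots,N, \] and \[ \underline{f}(n) = \sum_{k=2}^N f_{\mathrm{vi}}(k)\, \underline{f}(n-k+1) \quad \text{for } n \ge N+1. \] Then $f(n) \ge \underline{f}(n)$ for all $n \ge 1$. Furthermore, the infinite sequence $\underline{f}$ is determined by $f_{\mathrm{vi}}(1), f_{\mathrm{vi}}(2), \ldots, f_{\mathrm{vi}}(N)$ through a homogeneous linear recurrence relation of order $N-1$ with constant coefficients.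
   Context: All lattices are finite, nonempty and unlabeled. The vertical sum $L+U$ of lattices $L$ and $U$ is obtained by identifying the top element of $L$ with the bottom element of $U$. A knot of a lattice $X$ is an element distinct from the top and bottom of $X$ that is comparable to every element of $X$; a lattice is vertically indecomposable if it has no knot. By convention the singleton lattice is counted as vertically indecomposable. *)

theory Defs
  imports Main
begin

type_synonym 'a ord_str = "'a set \<times> ('a \<times> 'a) set"

definition is_lub :: "'a ord_str \<Rightarrow> 'a \<Rightarrow> 'a \<Rightarrow> 'a \<Rightarrow> bool" where
  "is_lub L x y z \<longleftrightarrow> z \<in> fst L \<and> (x, z) \<in> snd L \<and> (y, z) \<in> snd L \<and>
     (\<forall>w\<in>fst L. (x, w) \<in> snd L \<and> (y, w) \<in> snd L \<longrightarrow> (z, w) \<in> snd L)"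

definition is_glb :: "'a ord_str \<Rightarrow> 'a \<Rightarrow> 'a \<Rightarrow> 'a \<Rightarrow> bool" where
  "is_glb L x y z \<longleftrightarrow> z \<in> fst L \<and> (z, x) \<in> snd L \<and> (z, y) \<in> snd L \<and>
     (\<forall>w\<in>fst L. (w, x) \<in> snd L \<and> (w, y) \<in> snd L \<longrightarrow> (w, z) \<in> snd L)"

definition fin_lattice :: "'a ord_str \<Rightarrow> bool" where
  "fin_lattice L \<longleftrightarrow> finite (fst L) \<and> fst L \<noteq> {} \<and>
     snd L \<subseteq> fst L \<times> fst L \<and> partial_order_on (fst L) (snd L) \<and>
     (\<forall>x\<in>fst L. \<forall>y\<in>fst L. (\<exists>z. is_lub L x y z) \<and> (\<exists>z. is_glb L x y z))"

definition lat_iso :: "'a ord_str \<Rightarrow> 'b ord_str \<Rightarrow> bool" where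
  "lat_iso L M \<longleftrightarrow> (\<exists>h. bij_betw h (fst L) (fst M) \<and>
     (\<forall>x\<in>fst L. \<forall>y\<in>fst L. (x, y) \<in> snd L \<longleftrightarrow> (h x, h y) \<in> snd M))"

definition lbot :: "'a ord_str \<Rightarrow> 'a" where
  "lbot L = (THE b. b \<in> fst L \<and> (\<forall>y\<in>fst L. (b, y) \<in> snd L))"

definition ltop :: "'a ord_str \<Rightarrow> 'a" where
  "ltop L = (THE t. t \<in> fst L \<and> (\<forall>y\<in>fst L. (y, t) \<in> snd L))"

text \<open>Vertical sum L + U: the top of L is identified with the bottom of U
  (we keep the top of L, represented as Inl, and drop the bottom of U).\<close>
definition vsum :: "'a ord_str \<Rightarrow> 'b ord_str \<Rightarrow> ('a + 'b) ord_str" where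
  "vsum L U =
    (Inl ` fst L \<union> Inr ` (fst U - {lbot U}),
     {(Inl x, Inl y) | x y. (x, y) \<in> snd L} \<union>
     {(Inr x, Inr y) | x y. (x, y) \<in> snd U \<and> x \<noteq> lbot U \<and> y \<noteq> lbot U} \<union>
     {(Inl x, Inr y) | x y. x \<in> fst L \<and> y \<in> fst U - {lbot U}})"

definition is_knot :: "'a ord_str \<Rightarrow> 'a \<Rightarrow> bool" where
  "is_knot L c \<longleftrightarrow> c \<in> fst L \<and> c \<noteq> ltop L \<and> c \<noteq> lbot L \<and>
     (\<forall>x\<in>fst L. (c, x) \<in> snd L \<or> (x, c) \<in> snd L)"

definition vert_indec :: "'a ord_str \<Rightarrow> bool" where
  "vert_indec L \<longleftrightarrow> \<not> (\<exists>c. is_knot L c)"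

definition count_classes :: "'a ord_str set \<Rightarrow> ('a ord_str \<Rightarrow> bool) \<Rightarrow> nat \<Rightarrow> nat" where
  "count_classes F P n =
     card ((\<lambda>L. {M \<in> F. lat_iso L M}) ` {L \<in> F. card (fst L) = n \<and> P L})"

definition fcount :: "'a ord_str set \<Rightarrow> nat \<Rightarrow> nat" where
  "fcount F n = count_classes F (\<lambda>_. True) n"

definition fvi :: "'a ord_str set \<Rightarrow> nat \<Rightarrow> nat" where
  "fvi F n = count_classes F vert_indec n"

text \<open>Hypotheses on the family: it consists of finite lattices (on the infinite
  carrier type nat, so every finite lattice has copies), is closed under
  isomorphism (a family of isomorphism classes), contains the singleton lattice,
  and is closed under vertical sum.\<close>
definition vsum_closed_family :: "nat ord_str set \<Rightarrow> bool" where
  "vsum_closed_family F \<longleftrightarrow>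
     (\<forall>L\<in>F. fin_lattice L) \<and>
     (\<forall>L\<in>F. \<forall>M. fin_lattice M \<and> lat_iso L M \<longrightarrow> M \<in> F) \<and>
     (\<exists>L\<in>F. card (fst L) = 1) \<and>
     (\<forall>L\<in>F. \<forall>U\<in>F. \<forall>X. fin_lattice X \<and> lat_iso X (vsum L U) \<longrightarrow> X \<in> F)"

end

theory Submission
  imports Defs "HOL-Library.Nat_Bijection"
begin

text \<open>If V is vertically indecomposable with at least two elements, the top of V is the
  lowest element of V + R, apart from the bottom, that is comparable to everything. An
  isomorphism must preserve it, so V + R determines V and R up to isomorphism. Hence the
  pairs (class of V with k elements, class of R with n - k + 1 elements) inject into the
  n-element classes of the family, giving f(n) \<ge> \<Sum>k. f_vi(k) f(n - k + 1).
  The lower sequence satisfies the reverse inequality, with some terms dropped when n > N,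
  so induction on n gives f(n) \<ge> fl(n). The recurrence of order N - 1 is the defining
  equation for n \<ge> N, reindexed.\<close>

section \<open>Finite lattices\<close>

lemma partial_order_on_iff_bounded:
  assumes "r \<subseteq> A \<times> A"
  shows "partial_order_on A r \<longleftrightarrow> refl_on A r \<and> antisym_on A r \<and> trans_on A r"
  using assms unfolding partial_order_on_def preorder_on_def antisym_on_def trans_on_def by blast

lemma fin_latticeD:
  assumes "fin_lattice L"
  shows fin_lattice_finite: "finite (fst L)"
    and fin_lattice_nonempty: "fst L \<noteq> {}"
    and fin_lattice_rel_subset: "snd L \<subseteq> fst L \<times> fst L"
    and fin_lattice_refl: "\<And>x. x \<in> fst L \<Longrightarrow> (x, x) \<in> snd L"
    and fin_lattice_antisym: "\<And>x y. (x, y) \<in> snd L \<Longrightarrow> (y, x) \<in> snd L \<Longrightarrow> x = y"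
    and fin_lattice_trans: "\<And>x y z. (x, y) \<in> snd L \<Longrightarrow> (y, z) \<in> snd L \<Longrightarrow> (x, z) \<in> snd L"
    and fin_lattice_has_lub: "\<And>x y. x \<in> fst L \<Longrightarrow> y \<in> fst L \<Longrightarrow> \<exists>z. is_lub L x y z"
    and fin_lattice_has_glb: "\<And>x y. x \<in> fst L \<Longrightarrow> y \<in> fst L \<Longrightarrow> \<exists>z. is_glb L x y z"
  using assms unfolding fin_lattice_def partial_order_on_def preorder_on_def refl_on_def
    antisym_on_def trans_on_def by blast+

lemma fin_lattice_has_lower_bound:
  assumes L: "fin_lattice L" and S: "finite S" "S \<noteq> {}" "S \<subseteq> fst L"
  shows "\<exists>b\<in>fst L. \<forall>y\<in>S. (b, y) \<in> snd L"
  using S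
proof (induction S rule: finite_ne_induct)
  case (singleton x)
  then show ?case using fin_lattice_refl[OF L] by auto
next
  case (insert x S)
  then obtain b where b: "b \<in> fst L" "\<forall>y\<in>S. (b, y) \<in> snd L" by auto
  obtain z where "is_glb L x b z" using fin_lattice_has_glb[OF L, of x b] insert b by auto
  then show ?case using b fin_lattice_trans[OF L] unfolding is_glb_def by blast
qed

lemma fin_lattice_has_upper_bound:
  assumes L: "fin_lattice L" and S: "finite S" "S \<noteq> {}" "S \<subseteq> fst L"
  shows "\<exists>t\<in>fst L. \<forall>y\<in>S. (y, t) \<in> snd L"
  using S
proof (induction S rule: finite_ne_induct)
  case (singleton x)
  then show ?case using fin_lattice_refl[OF L] by auto
next
  case (insert x S)
  then obtain t where t: "t \<in> fst L" "\<forall>y\<in>S. (y, t) \<in> snd L" by auto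
  obtain z where "is_lub L x t z" using fin_lattice_has_lub[OF L, of x t] insert t by auto
  then show ?case using t fin_lattice_trans[OF L] unfolding is_lub_def by blast
qed

lemma lbot_least:
  assumes L: "fin_lattice L"
  shows lbot_mem: "lbot L \<in> fst L" and lbot_le: "\<And>y. y \<in> fst L \<Longrightarrow> (lbot L, y) \<in> snd L"
proof -
  obtain b where b: "b \<in> fst L" "\<forall>y\<in>fst L. (b, y) \<in> snd L"
    using fin_lattice_has_lower_bound[OF L fin_lattice_finite[OF L] fin_lattice_nonempty[OF L]] by blast
  have "lbot L = b" unfolding lbot_def
    by (rule the_equality) (use b fin_lattice_antisym[OF L] in blast)+
  then show "lbot L \<in> fst L" "\<And>y. y \<in> fst L \<Longrightarrow> (lbot L, y) \<in> snd L" using b by auto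
qed

lemma ltop_greatest:
  assumes L: "fin_lattice L"
  shows ltop_mem: "ltop L \<in> fst L" and le_ltop: "\<And>y. y \<in> fst L \<Longrightarrow> (y, ltop L) \<in> snd L"
proof -
  obtain t where t: "t \<in> fst L" "\<forall>y\<in>fst L. (y, t) \<in> snd L"
    using fin_lattice_has_upper_bound[OF L fin_lattice_finite[OF L] fin_lattice_nonempty[OF L]] by blast
  have "ltop L = t" unfolding ltop_def
    by (rule the_equality) (use t fin_lattice_antisym[OF L] in blast)+
  then show "ltop L \<in> fst L" "\<And>y. y \<in> fst L \<Longrightarrow> (y, ltop L) \<in> snd L" using t by auto
qed

lemma ltop_ne_lbot:
  assumes L: "fin_lattice L" and "card (fst L) \<ge> 2"
  shows "ltop L \<noteq> lbot L"
proof
  assume "ltop L = lbot L"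
  then have "fst L \<subseteq> {lbot L}"
    using lbot_le[OF L] le_ltop[OF L] fin_lattice_antisym[OF L] by (metis singletonI subsetI)
  then have "card (fst L) \<le> 1" using card_mono[of "{lbot L}"] by simp
  then show False using assms(2) by simp
qed

section \<open>Order isomorphisms\<close>

locale order_iso =
  fixes X :: "'a ord_str" and Y :: "'b ord_str" and h :: "'a \<Rightarrow> 'b"
  assumes bij: "bij_betw h (fst X) (fst Y)"
    and ord: "\<And>x y. x \<in> fst X \<Longrightarrow> y \<in> fst X \<Longrightarrow> (x, y) \<in> snd X \<longleftrightarrow> (h x, h y) \<in> snd Y"
begin

lemma rel_iff: "x \<in> fst X \<Longrightarrow> y \<in> fst X \<Longrightarrow> (h x, h y) \<in> snd Y \<longleftrightarrow> (x, y) \<in> snd X"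
  using ord by simp

lemma image_eq: "fst Y = h ` fst X"
  using bij by (simp add: bij_betw_def)

lemma mem: "x \<in> fst X \<Longrightarrow> h x \<in> fst Y"
  using image_eq by blast

lemma eq_iff: "x \<in> fst X \<Longrightarrow> y \<in> fst X \<Longrightarrow> h x = h y \<longleftrightarrow> x = y"
  using bij by (auto simp: bij_betw_def inj_on_def)

lemma ball_iff: "(\<forall>u\<in>fst Y. P u) \<longleftrightarrow> (\<forall>x\<in>fst X. P (h x))"
  using image_eq by simp

lemma bex_iff: "(\<exists>u\<in>fst Y. P u) \<longleftrightarrow> (\<exists>x\<in>fst X. P (h x))"
  using image_eq by simp

lemma is_lub_iff:
  "x \<in> fst X \<Longrightarrow> y \<in> fst X \<Longrightarrow> z \<in> fst X \<Longrightarrow> is_lub Y (h x) (h y) (h z) \<longleftrightarrow> is_lub X x y z"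
  unfolding is_lub_def by (simp add: ball_iff mem rel_iff)

lemma is_glb_iff:
  "x \<in> fst X \<Longrightarrow> y \<in> fst X \<Longrightarrow> z \<in> fst X \<Longrightarrow> is_glb Y (h x) (h y) (h z) \<longleftrightarrow> is_glb X x y z"
  unfolding is_glb_def by (simp add: ball_iff mem rel_iff)

lemma ex_lub_iff:
  assumes "x \<in> fst X" "y \<in> fst X"
  shows "(\<exists>z. is_lub Y (h x) (h y) z) \<longleftrightarrow> (\<exists>z. is_lub X x y z)"
proof -
  have "(\<exists>z. is_lub Y (h x) (h y) z) \<longleftrightarrow> (\<exists>z\<in>fst Y. is_lub Y (h x) (h y) z)"
    by (auto simp: is_lub_def)
  also have "\<dots> \<longleftrightarrow> (\<exists>z\<in>fst X. is_lub X x y z)"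
    using assms by (simp add: bex_iff is_lub_iff)
  also have "\<dots> \<longleftrightarrow> (\<exists>z. is_lub X x y z)"
    by (auto simp: is_lub_def)
  finally show ?thesis .
qed

lemma ex_glb_iff:
  assumes "x \<in> fst X" "y \<in> fst X"
  shows "(\<exists>z. is_glb Y (h x) (h y) z) \<longleftrightarrow> (\<exists>z. is_glb X x y z)"
proof -
  have "(\<exists>z. is_glb Y (h x) (h y) z) \<longleftrightarrow> (\<exists>z\<in>fst Y. is_glb Y (h x) (h y) z)"
    by (auto simp: is_glb_def)
  also have "\<dots> \<longleftrightarrow> (\<exists>z\<in>fst X. is_glb X x y z)"
    using assms by (simp add: bex_iff is_glb_iff)
  also have "\<dots> \<longleftrightarrow> (\<exists>z. is_glb X x y z)"
    by (auto simp: is_glb_def)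
  finally show ?thesis .
qed

lemma fin_lattice_iff:
  assumes "snd X \<subseteq> fst X \<times> fst X" "snd Y \<subseteq> fst Y \<times> fst Y"
  shows "fin_lattice Y \<longleftrightarrow> fin_lattice X"
proof -
  have "finite (fst Y) \<longleftrightarrow> finite (fst X)" "fst Y = {} \<longleftrightarrow> fst X = {}"
    using bij bij_betw_finite image_eq by auto
  moreover have "partial_order_on (fst Y) (snd Y) \<longleftrightarrow> partial_order_on (fst X) (snd X)"
    unfolding partial_order_on_iff_bounded[OF assms(1)] partial_order_on_iff_bounded[OF assms(2)]
      refl_on_def antisym_on_def trans_on_def
    by (simp add: ball_iff mem rel_iff eq_iff)
  ultimately show ?thesis
    unfolding fin_lattice_def using assms by (simp add: ball_iff mem ex_lub_iff ex_glb_iff)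
qed

lemma inverse: "order_iso Y X (inv_into (fst X) h)"
proof
  show bij_inv: "bij_betw (inv_into (fst X) h) (fst Y) (fst X)"
    using bij by (rule bij_betw_inv_into)
  fix u v assume "u \<in> fst Y" "v \<in> fst Y"
  then show "(u, v) \<in> snd Y \<longleftrightarrow> (inv_into (fst X) h u, inv_into (fst X) h v) \<in> snd X"
    using rel_iff bij_betw_apply[OF bij_inv] bij_betw_inv_into_right[OF bij] by metis
qed

end

lemma lat_iso_iff_order_iso: "lat_iso L M \<longleftrightarrow> (\<exists>h. order_iso L M h)"
  unfolding lat_iso_def order_iso_def by blast

lemma lat_iso_refl: "lat_iso L L"
  unfolding lat_iso_def by (rule exI[of _ id]) auto

lemma lat_iso_sym: "lat_iso L M \<Longrightarrow> lat_iso M L"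
  unfolding lat_iso_iff_order_iso using order_iso.inverse by blast

lemma lat_iso_trans:
  assumes "lat_iso L M" "lat_iso M K"
  shows "lat_iso L K"
proof -
  obtain h g where h: "order_iso L M h" and g: "order_iso M K g"
    using assms unfolding lat_iso_iff_order_iso by blast
  have "order_iso L K (g \<circ> h)"
    using bij_betw_trans[OF order_iso.bij[OF h] order_iso.bij[OF g]]
      order_iso.ord[OF h] order_iso.ord[OF g] order_iso.mem[OF h]
    by unfold_locales auto
  then show ?thesis unfolding lat_iso_iff_order_iso by blast
qed

lemma lat_iso_card: "lat_iso L M \<Longrightarrow> card (fst L) = card (fst M)"
  unfolding lat_iso_def using bij_betw_same_card by blast

definition map_ord_str :: "('a \<Rightarrow> 'b) \<Rightarrow> 'a ord_str \<Rightarrow> 'b ord_str" where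
  "map_ord_str h L = (h ` fst L, map_prod h h ` snd L)"

lemma order_iso_map_ord_str:
  assumes inj: "inj_on h (fst L)" and sub: "snd L \<subseteq> fst L \<times> fst L"
  shows "order_iso L (map_ord_str h L) h"
proof
  show "bij_betw h (fst L) (fst (map_ord_str h L))"
    using inj by (simp add: map_ord_str_def bij_betw_def)
  fix x y assume xy: "x \<in> fst L" "y \<in> fst L"
  show "(x, y) \<in> snd L \<longleftrightarrow> (h x, h y) \<in> snd (map_ord_str h L)"
  proof
    assume "(h x, h y) \<in> snd (map_ord_str h L)"
    then obtain a b where ab: "(a, b) \<in> snd L" "h a = h x" "h b = h y"
      unfolding map_ord_str_def by auto
    then have "a = x" "b = y"
      using sub xy inj_onD[OF inj] by blast+
    then show "(x, y) \<in> snd L" using ab by simp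
  qed (auto simp: map_ord_str_def)
qed

lemma map_ord_str_props:
  assumes inj: "inj_on h (fst L)" and L: "fin_lattice L"
  shows lat_iso_map_ord_str: "lat_iso L (map_ord_str h L)"
    and fin_lattice_map_ord_str: "fin_lattice (map_ord_str h L)"
proof -
  note sub = fin_lattice_rel_subset[OF L]
  note iso = order_iso_map_ord_str[OF inj sub]
  show "lat_iso L (map_ord_str h L)"
    using iso unfolding lat_iso_iff_order_iso by blast
  have "snd (map_ord_str h L) \<subseteq> fst (map_ord_str h L) \<times> fst (map_ord_str h L)"
    using sub by (auto simp: map_ord_str_def)
  then show "fin_lattice (map_ord_str h L)"
    using order_iso.fin_lattice_iff[OF iso sub] L by blast
qed

section \<open>Vertical sums\<close>

lemma vsum_simps [simp]:
  "Inl x \<in> fst (vsum L U) \<longleftrightarrow> x \<in> fst L"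
  "Inr y \<in> fst (vsum L U) \<longleftrightarrow> y \<in> fst U \<and> y \<noteq> lbot U"
  "(Inl x, Inl x') \<in> snd (vsum L U) \<longleftrightarrow> (x, x') \<in> snd L"
  "(Inr y, Inr y') \<in> snd (vsum L U) \<longleftrightarrow> (y, y') \<in> snd U \<and> y \<noteq> lbot U \<and> y' \<noteq> lbot U"
  "(Inl x, Inr y) \<in> snd (vsum L U) \<longleftrightarrow> x \<in> fst L \<and> y \<in> fst U \<and> y \<noteq> lbot U"
  "(Inr y, Inl x) \<notin> snd (vsum L U)"
  by (auto simp: vsum_def)

lemma vsum_ball:
  "(\<forall>w\<in>fst (vsum L U). P w) \<longleftrightarrow>
     (\<forall>x\<in>fst L. P (Inl x)) \<and> (\<forall>y\<in>fst U. y \<noteq> lbot U \<longrightarrow> P (Inr y))"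
  by (auto simp: vsum_def)

lemma vsum_partial_order:
  assumes L: "fin_lattice L" and U: "fin_lattice U"
  shows "partial_order_on (fst (vsum L U)) (snd (vsum L U))"
proof -
  have sub: "snd (vsum L U) \<subseteq> fst (vsum L U) \<times> fst (vsum L U)"
    using fin_lattice_rel_subset[OF L] fin_lattice_rel_subset[OF U] by (auto simp: vsum_def)
  have "refl_on (fst (vsum L U)) (snd (vsum L U))"
    unfolding refl_on_def using fin_lattice_refl[OF L] fin_lattice_refl[OF U] by (simp add: vsum_ball)
  moreover have "antisym_on (fst (vsum L U)) (snd (vsum L U))"
    unfolding antisym_on_def using fin_lattice_antisym[OF L] fin_lattice_antisym[OF U]
    by (simp add: vsum_ball)
  moreover have "trans_on (fst (vsum L U)) (snd (vsum L U))"
    unfolding trans_on_def using fin_lattice_trans[OF L] fin_lattice_trans[OF U]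
    by (simp add: vsum_ball)
  ultimately show ?thesis by (simp add: partial_order_on_iff_bounded[OF sub])
qed

lemma vsum_has_lub:
  assumes L: "fin_lattice L" and U: "fin_lattice U"
    and a: "a \<in> fst (vsum L U)" and b: "b \<in> fst (vsum L U)"
  shows "\<exists>z. is_lub (vsum L U) a b z"
proof (cases a; cases b)
  fix x y assume ab: "a = Inl x" "b = Inl y"
  then obtain z where "is_lub L x y z" using fin_lattice_has_lub[OF L] a b by auto
  then have "is_lub (vsum L U) a b (Inl z)" using ab unfolding is_lub_def by (simp add: vsum_ball)
  then show ?thesis by blast
next
  fix x y assume ab: "a = Inl x" "b = Inr y"
  then have "is_lub (vsum L U) a b b" using a b fin_lattice_refl[OF U]
    unfolding is_lub_def by (simp add: vsum_ball)
  then show ?thesis by blast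
next
  fix x y assume ab: "a = Inr x" "b = Inl y"
  then have "is_lub (vsum L U) a b a" using a b fin_lattice_refl[OF U]
    unfolding is_lub_def by (simp add: vsum_ball)
  then show ?thesis by blast
next
  fix x y assume ab: "a = Inr x" "b = Inr y"
  then obtain z where z: "is_lub U x y z" using fin_lattice_has_lub[OF U] a b by auto
  have "z \<noteq> lbot U"
    using z ab a b fin_lattice_antisym[OF U] lbot_le[OF U] unfolding is_lub_def by auto
  then have "is_lub (vsum L U) a b (Inr z)" using z ab a b unfolding is_lub_def by (simp add: vsum_ball)
  then show ?thesis by blast
qed

text \<open>The only new case is a pair in the upper part whose meet in U is the removed bottom:
  their meet in the sum is the glueing point, the top of L.\<close>

lemma vsum_has_glb:
  assumes L: "fin_lattice L" and U: "fin_lattice U"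
    and a: "a \<in> fst (vsum L U)" and b: "b \<in> fst (vsum L U)"
  shows "\<exists>z. is_glb (vsum L U) a b z"
proof (cases a; cases b)
  fix x y assume ab: "a = Inl x" "b = Inl y"
  then obtain z where "is_glb L x y z" using fin_lattice_has_glb[OF L] a b by auto
  then have "is_glb (vsum L U) a b (Inl z)" using ab unfolding is_glb_def by (simp add: vsum_ball)
  then show ?thesis by blast
next
  fix x y assume ab: "a = Inl x" "b = Inr y"
  then have "is_glb (vsum L U) a b a" using a b fin_lattice_refl[OF L]
    unfolding is_glb_def by (simp add: vsum_ball)
  then show ?thesis by blast
next
  fix x y assume ab: "a = Inr x" "b = Inl y"
  then have "is_glb (vsum L U) a b b" using a b fin_lattice_refl[OF L]
    unfolding is_glb_def by (simp add: vsum_ball)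
  then show ?thesis by blast
next
  fix x y assume ab: "a = Inr x" "b = Inr y"
  then have xy: "x \<in> fst U" "y \<in> fst U" "x \<noteq> lbot U" "y \<noteq> lbot U" using a b by auto
  obtain z where z: "is_glb U x y z" using fin_lattice_has_glb[OF U xy(1,2)] by blast
  show ?thesis
  proof (cases "z = lbot U")
    case True
    then have "\<forall>w\<in>fst U. w \<noteq> lbot U \<longrightarrow> \<not> ((w, x) \<in> snd U \<and> (w, y) \<in> snd U)"
      using z lbot_le[OF U] fin_lattice_antisym[OF U] unfolding is_glb_def by metis
    then have "is_glb (vsum L U) a b (Inl (ltop L))"
      unfolding is_glb_def using xy ab ltop_greatest[OF L] by (simp add: vsum_ball)
    then show ?thesis by blast
  next
    case False
    then have "is_glb (vsum L U) a b (Inr z)" using z ab a b unfolding is_glb_def by (simp add: vsum_ball)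
    then show ?thesis by blast
  qed
qed

lemma fin_lattice_vsum:
  assumes L: "fin_lattice L" and U: "fin_lattice U"
  shows "fin_lattice (vsum L U)"
  unfolding fin_lattice_def
proof (intro conjI ballI)
  show "finite (fst (vsum L U))"
    using fin_lattice_finite[OF L] fin_lattice_finite[OF U] by (simp add: vsum_def)
  show "fst (vsum L U) \<noteq> {}" using fin_lattice_nonempty[OF L] by (auto simp: vsum_def)
  show "snd (vsum L U) \<subseteq> fst (vsum L U) \<times> fst (vsum L U)"
    using fin_lattice_rel_subset[OF L] fin_lattice_rel_subset[OF U] by (auto simp: vsum_def)
qed (use vsum_partial_order vsum_has_lub vsum_has_glb assms in blast)+

lemma card_vsum:
  assumes L: "fin_lattice L" and U: "fin_lattice U"
  shows "card (fst (vsum L U)) = card (fst L) + card (fst U) - 1"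
proof -
  have "card (fst (vsum L U)) = card (Inl ` fst L :: ('a + 'b) set) + card (Inr ` (fst U - {lbot U}) :: ('a + 'b) set)"
    unfolding vsum_def fst_conv
    by (rule card_Un_disjoint) (use fin_lattice_finite[OF L] fin_lattice_finite[OF U] in auto)
  moreover have "card (fst U) \<ge> 1"
    using fin_lattice_finite[OF U] fin_lattice_nonempty[OF U] by (simp add: Suc_le_eq card_gt_0_iff)
  ultimately show ?thesis
    using lbot_mem[OF U] fin_lattice_finite[OF U] by (simp add: card_image)
qed

section \<open>Recovering the summands of a vertical sum\<close>

definition comparable_to_all :: "'a ord_str \<Rightarrow> 'a \<Rightarrow> bool" where
  "comparable_to_all X c \<longleftrightarrow> c \<in> fst X \<and> (\<forall>x\<in>fst X. (c, x) \<in> snd X \<or> (x, c) \<in> snd X)"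

definition is_least :: "'a ord_str \<Rightarrow> 'a \<Rightarrow> bool" where
  "is_least X c \<longleftrightarrow> (\<forall>y\<in>fst X. (c, y) \<in> snd X)"

text \<open>In V + R with V vertically indecomposable and nontrivial, this is the top of V;
  it is defined by the order alone, so isomorphisms must preserve it.\<close>

definition lowest_cut :: "'a ord_str \<Rightarrow> 'a \<Rightarrow> bool" where
  "lowest_cut X c \<longleftrightarrow> comparable_to_all X c \<and> \<not> is_least X c \<and>
     (\<forall>d. comparable_to_all X d \<and> \<not> is_least X d \<longrightarrow> (c, d) \<in> snd X)"

definition restrict_ord :: "'a ord_str \<Rightarrow> 'a set \<Rightarrow> 'a ord_str" where
  "restrict_ord X S = (S, snd X \<inter> S \<times> S)"

definition down_set :: "'a ord_str \<Rightarrow> 'a \<Rightarrow> 'a set" where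
  "down_set X c = {x \<in> fst X. (x, c) \<in> snd X}"

definition up_set :: "'a ord_str \<Rightarrow> 'a \<Rightarrow> 'a set" where
  "up_set X c = {x \<in> fst X. (c, x) \<in> snd X}"

context order_iso
begin

lemma comparable_to_all_iff: "c \<in> fst X \<Longrightarrow> comparable_to_all Y (h c) \<longleftrightarrow> comparable_to_all X c"
  unfolding comparable_to_all_def by (simp add: ball_iff mem rel_iff)

lemma is_least_iff: "c \<in> fst X \<Longrightarrow> is_least Y (h c) \<longleftrightarrow> is_least X c"
  unfolding is_least_def by (simp add: ball_iff rel_iff)

lemma lowest_cut_image:
  assumes c: "lowest_cut X c"
  shows "lowest_cut Y (h c)"
proof -
  have c_mem: "c \<in> fst X" using c unfolding lowest_cut_def comparable_to_all_def by blast
  have "(h c, d) \<in> snd Y" if d: "comparable_to_all Y d" "\<not> is_least Y d" for d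
  proof -
    obtain x where x: "x \<in> fst X" "d = h x"
      using d image_eq unfolding comparable_to_all_def by blast
    then have "(c, x) \<in> snd X"
      using c d unfolding lowest_cut_def by (simp add: comparable_to_all_iff is_least_iff)
    then show ?thesis using c_mem x by (simp add: rel_iff)
  qed
  then show ?thesis
    using c c_mem unfolding lowest_cut_def by (simp add: comparable_to_all_iff is_least_iff)
qed

lemma lat_iso_restrict:
  assumes "S \<subseteq> fst X"
  shows "lat_iso (restrict_ord X S) (restrict_ord Y (h ` S))"
  unfolding lat_iso_def restrict_ord_def fst_conv snd_conv
proof (intro exI conjI)
  show "bij_betw h S (h ` S)" using bij_betw_subset[OF bij assms] by simp
  show "\<forall>x\<in>S. \<forall>y\<in>S. (x, y) \<in> snd X \<inter> S \<times> S \<longleftrightarrow> (h x, h y) \<in> snd Y \<inter> h ` S \<times> h ` S"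
    using assms by (auto simp: subset_iff rel_iff)
qed

lemma down_set_image: "c \<in> fst X \<Longrightarrow> h ` down_set X c = down_set Y (h c)"
  unfolding down_set_def using image_eq by (auto simp: mem rel_iff)

lemma up_set_image: "c \<in> fst X \<Longrightarrow> h ` up_set X c = up_set Y (h c)"
  unfolding up_set_def using image_eq by (auto simp: mem rel_iff)

end

lemma lowest_cut_unique:
  assumes "fin_lattice X" "lowest_cut X c" "lowest_cut X c'"
  shows "c = c'"
  using assms fin_lattice_antisym[OF assms(1)] unfolding lowest_cut_def by blast

lemma lowest_cut_vsum:
  assumes V: "fin_lattice V" and vi: "vert_indec V" and card: "card (fst V) \<ge> 2"
  shows "lowest_cut (vsum V R) (Inl (ltop V))"
proof -
  have "comparable_to_all (vsum V R) (Inl (ltop V))"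
    unfolding comparable_to_all_def using ltop_greatest[OF V] by (simp add: vsum_ball)
  moreover have "(ltop V, lbot V) \<notin> snd V"
    using ltop_ne_lbot[OF V card] lbot_le[OF V] ltop_mem[OF V] fin_lattice_antisym[OF V] by blast
  then have "\<not> is_least (vsum V R) (Inl (ltop V))"
    unfolding is_least_def using lbot_mem[OF V] by (auto simp: vsum_ball)
  moreover have "(Inl (ltop V), d) \<in> snd (vsum V R)"
    if d: "comparable_to_all (vsum V R) d" "\<not> is_least (vsum V R) d" for d
  proof (cases d)
    case (Inl x)
    have "x \<in> fst V" "\<forall>y\<in>fst V. (x, y) \<in> snd V \<or> (y, x) \<in> snd V"
      using d Inl unfolding comparable_to_all_def by (simp_all add: vsum_ball)
    moreover have "x \<noteq> lbot V"
      using d Inl lbot_least[OF V] unfolding is_least_def by (auto simp: vsum_ball)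
    moreover have "\<not> is_knot V x" using vi unfolding vert_indec_def by blast
    ultimately have "x = ltop V" unfolding is_knot_def by blast
    then show ?thesis using Inl fin_lattice_refl[OF V] ltop_mem[OF V] by simp
  next
    case (Inr y)
    then show ?thesis using d ltop_mem[OF V] unfolding comparable_to_all_def by simp
  qed
  ultimately show ?thesis unfolding lowest_cut_def by blast
qed

lemma lat_iso_vsum_down_set:
  assumes V: "fin_lattice V"
  shows "lat_iso V (restrict_ord (vsum V R) (down_set (vsum V R) (Inl (ltop V))))"
proof -
  have "down_set (vsum V R) (Inl (ltop V)) = Inl ` fst V"
    using le_ltop[OF V] unfolding down_set_def by (auto simp: vsum_def)
  then show ?thesis
    unfolding lat_iso_def restrict_ord_def
    by (intro exI[of _ Inl]) (auto simp: bij_betw_def fin_lattice_rel_subset[OF V])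
qed

lemma lat_iso_vsum_up_set:
  assumes V: "fin_lattice V" and R: "fin_lattice R"
  shows "lat_iso R (restrict_ord (vsum V R) (up_set (vsum V R) (Inl (ltop V))))"
proof -
  define g where "g y = (if y = lbot R then Inl (ltop V) else Inr y)" for y
  have "up_set (vsum V R) (Inl (ltop V)) = g ` fst R"
    using ltop_greatest[OF V] lbot_mem[OF R] fin_lattice_antisym[OF V]
    unfolding up_set_def g_def by (auto simp: vsum_def image_iff)
  moreover have "bij_betw g (fst R) (g ` fst R)"
    by (auto simp: bij_betw_def inj_on_def g_def)
  moreover have "(x, y) \<in> snd R \<longleftrightarrow> (g x, g y) \<in> snd (vsum V R)" if "x \<in> fst R" "y \<in> fst R" for x y
    using that lbot_least[OF R] ltop_greatest[OF V] fin_lattice_refl[OF V]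
      fin_lattice_antisym[OF R] unfolding g_def by auto
  ultimately show ?thesis
    unfolding lat_iso_def restrict_ord_def by (intro exI[of _ g]) auto
qed

lemma vsum_lat_iso_cancel:
  fixes V V' :: "'a ord_str" and R R' :: "'b ord_str"
  assumes V: "fin_lattice V" "vert_indec V" "card (fst V) \<ge> 2" and R: "fin_lattice R"
    and V': "fin_lattice V'" "vert_indec V'" "card (fst V') \<ge> 2" and R': "fin_lattice R'"
    and iso: "lat_iso (vsum V R) (vsum V' R')"
  shows "lat_iso V V'" and "lat_iso R R'"
proof -
  obtain h where h: "order_iso (vsum V R) (vsum V' R') h"
    using iso unfolding lat_iso_iff_order_iso by blast
  have hc: "h (Inl (ltop V)) = Inl (ltop V')"
    using lowest_cut_unique[OF fin_lattice_vsum[OF V'(1) R']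
        order_iso.lowest_cut_image[OF h lowest_cut_vsum[OF V(1-3)]] lowest_cut_vsum[OF V'(1-3)]] .
  have c: "Inl (ltop V) \<in> fst (vsum V R)" using ltop_mem[OF V(1)] by simp
  have "down_set (vsum V R) (Inl (ltop V)) \<subseteq> fst (vsum V R)"
    by (auto simp: down_set_def)
  from order_iso.lat_iso_restrict[OF h this]
  have "lat_iso (restrict_ord (vsum V R) (down_set (vsum V R) (Inl (ltop V))))
                (restrict_ord (vsum V' R') (down_set (vsum V' R') (Inl (ltop V'))))"
    by (simp add: order_iso.down_set_image[OF h c] hc)
  then show "lat_iso V V'"
    using lat_iso_trans lat_iso_sym lat_iso_vsum_down_set[OF V(1)] lat_iso_vsum_down_set[OF V'(1)]
    by metis
  have "up_set (vsum V R) (Inl (ltop V)) \<subseteq> fst (vsum V R)"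
    by (auto simp: up_set_def)
  from order_iso.lat_iso_restrict[OF h this]
  have "lat_iso (restrict_ord (vsum V R) (up_set (vsum V R) (Inl (ltop V))))
                (restrict_ord (vsum V' R') (up_set (vsum V' R') (Inl (ltop V'))))"
    by (simp add: order_iso.up_set_image[OF h c] hc)
  then show "lat_iso R R'"
    using lat_iso_trans lat_iso_sym lat_iso_vsum_up_set[OF V(1) R] lat_iso_vsum_up_set[OF V'(1) R']
    by metis
qed

section \<open>Counting isomorphism classes\<close>

definition iso_class :: "'a ord_str set \<Rightarrow> 'a ord_str \<Rightarrow> 'a ord_str set" where
  "iso_class F L = {M \<in> F. lat_iso L M}"

definition classes :: "'a ord_str set \<Rightarrow> ('a ord_str \<Rightarrow> bool) \<Rightarrow> nat \<Rightarrow> 'a ord_str set set" where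
  "classes F P n = iso_class F ` {L \<in> F. card (fst L) = n \<and> P L}"

lemma count_classes_eq_card: "count_classes F P n = card (classes F P n)"
  by (simp add: count_classes_def classes_def iso_class_def)

lemma iso_class_eq_iff:
  assumes "M \<in> F"
  shows "iso_class F L = iso_class F M \<longleftrightarrow> lat_iso L M"
proof
  assume "iso_class F L = iso_class F M"
  moreover have "M \<in> iso_class F M" using assms lat_iso_refl by (simp add: iso_class_def)
  ultimately show "lat_iso L M" by (auto simp: iso_class_def)
next
  assume "lat_iso L M"
  then show "iso_class F L = iso_class F M"
    unfolding iso_class_def using lat_iso_sym lat_iso_trans by blast
qed

lemma vsum_closed_familyD:
  assumes "vsum_closed_family F"
  shows vsum_closed_family_fin_lattice: "\<And>L. L \<in> F \<Longrightarrow> fin_lattice L"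
    and vsum_closed_family_iso: "\<And>L M. L \<in> F \<Longrightarrow> fin_lattice M \<Longrightarrow> lat_iso L M \<Longrightarrow> M \<in> F"
    and vsum_closed_family_singleton: "\<exists>L\<in>F. card (fst L) = 1"
    and vsum_closed_family_vsum:
      "\<And>L U X. L \<in> F \<Longrightarrow> U \<in> F \<Longrightarrow> fin_lattice X \<Longrightarrow> lat_iso X (vsum L U) \<Longrightarrow> X \<in> F"
  using assms unfolding vsum_closed_family_def by blast+

text \<open>Every n-element class has a member carried by {0..<n}, and there are only
  finitely many relations on that set.\<close>

lemma finite_classes:
  assumes F: "vsum_closed_family F"
  shows "finite (classes F P n)"
proof -
  let ?T = "{L :: nat ord_str. fst L = {0..<n} \<and> snd L \<subseteq> {0..<n} \<times> {0..<n}}"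
  have "?T \<subseteq> {{0..<n}} \<times> Pow ({0..<n} \<times> {0..<n})" by auto
  then have "finite ?T" by (rule finite_subset) auto
  moreover have "classes F P n \<subseteq> iso_class F ` ?T"
  proof
    fix A assume "A \<in> classes F P n"
    then obtain L where L: "L \<in> F" "card (fst L) = n" "A = iso_class F L"
      unfolding classes_def by blast
    have fl: "fin_lattice L" using vsum_closed_family_fin_lattice[OF F L(1)] .
    obtain b where b: "bij_betw b (fst L) {0..<n}"
      using ex_bij_betw_finite_nat[OF fin_lattice_finite[OF fl]] L(2) by blast
    then have inj: "inj_on b (fst L)" by (simp add: bij_betw_def)
    let ?M = "map_ord_str b L"
    have M: "?M \<in> F"
      using vsum_closed_family_iso[OF F L(1) fin_lattice_map_ord_str[OF inj fl]
          lat_iso_map_ord_str[OF inj fl]] .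
    have "fst ?M = {0..<n}" using b by (simp add: map_ord_str_def bij_betw_def)
    then have "?M \<in> ?T" using fin_lattice_rel_subset[OF fin_lattice_map_ord_str[OF inj fl]] by simp
    moreover have "A = iso_class F ?M"
      using L(3) iso_class_eq_iff[OF M] lat_iso_map_ord_str[OF inj fl] by simp
    ultimately show "A \<in> iso_class F ` ?T" by blast
  qed
  ultimately show ?thesis using finite_surj by blast
qed

definition class_rep :: "'a ord_str set \<Rightarrow> ('a ord_str \<Rightarrow> bool) \<Rightarrow> nat \<Rightarrow> 'a ord_str set \<Rightarrow> 'a ord_str" where
  "class_rep F P n A = (SOME L. L \<in> F \<and> card (fst L) = n \<and> P L \<and> A = iso_class F L)"

lemma class_rep:
  assumes "A \<in> classes F P n"
  shows "class_rep F P n A \<in> F" "card (fst (class_rep F P n A)) = n"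
    "P (class_rep F P n A)" "iso_class F (class_rep F P n A) = A"
proof -
  have "\<exists>L. L \<in> F \<and> card (fst L) = n \<and> P L \<and> A = iso_class F L"
    using assms unfolding classes_def by blast
  from someI_ex[OF this] show "class_rep F P n A \<in> F" "card (fst (class_rep F P n A)) = n"
    "P (class_rep F P n A)" "iso_class F (class_rep F P n A) = A"
    unfolding class_rep_def by auto
qed

text \<open>The family lives on nat, so the vertical sum is copied back along an injection
  of nat + nat into nat.\<close>

definition vsum_nat :: "nat ord_str \<Rightarrow> nat ord_str \<Rightarrow> nat ord_str" where
  "vsum_nat V R = map_ord_str sum_encode (vsum V R)"

lemma vsum_nat_props:
  assumes V: "fin_lattice V" and R: "fin_lattice R"
  shows fin_lattice_vsum_nat: "fin_lattice (vsum_nat V R)"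
    and lat_iso_vsum_nat: "lat_iso (vsum_nat V R) (vsum V R)"
    and card_vsum_nat: "card (fst (vsum_nat V R)) = card (fst V) + card (fst R) - 1"
proof -
  note inj = inj_sum_encode[of "fst (vsum V R)"] and VR = fin_lattice_vsum[OF V R]
  show "fin_lattice (vsum_nat V R)"
    unfolding vsum_nat_def using fin_lattice_map_ord_str[OF inj VR] .
  show "lat_iso (vsum_nat V R) (vsum V R)"
    unfolding vsum_nat_def using lat_iso_sym[OF lat_iso_map_ord_str[OF inj VR]] .
  show "card (fst (vsum_nat V R)) = card (fst V) + card (fst R) - 1"
    unfolding vsum_nat_def map_ord_str_def using card_vsum[OF V R] card_image[OF inj] by simp
qed

lemma vsum_nat_mem_family:
  assumes F: "vsum_closed_family F" and "V \<in> F" "R \<in> F"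
  shows "vsum_nat V R \<in> F"
  using assms vsum_closed_family_fin_lattice[OF F]
  by (blast intro: vsum_closed_family_vsum[OF F] fin_lattice_vsum_nat lat_iso_vsum_nat)

lemma iso_class_vsum_nat_cancel:
  assumes F: "vsum_closed_family F"
    and V: "V \<in> F" "vert_indec V" "card (fst V) \<ge> 2" and R: "R \<in> F"
    and V': "V' \<in> F" "vert_indec V'" "card (fst V') \<ge> 2" and R': "R' \<in> F"
    and eq: "iso_class F (vsum_nat V R) = iso_class F (vsum_nat V' R')"
  shows "lat_iso V V'" and "lat_iso R R'"
proof -
  note fl = vsum_closed_family_fin_lattice[OF F]
  have "lat_iso (vsum_nat V R) (vsum_nat V' R')"
    using eq iso_class_eq_iff[OF vsum_nat_mem_family[OF F V'(1) R']] by simp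
  then have "lat_iso (vsum V R) (vsum V' R')"
    using lat_iso_trans[OF lat_iso_sym[OF lat_iso_vsum_nat[OF fl[OF V(1)] fl[OF R]]]]
      lat_iso_trans[OF _ lat_iso_vsum_nat[OF fl[OF V'(1)] fl[OF R']]] by blast
  then show "lat_iso V V'" "lat_iso R R'"
    using vsum_lat_iso_cancel[OF fl[OF V(1)] V(2,3) fl[OF R] fl[OF V'(1)] V'(2,3) fl[OF R']] by blast+
qed

lemma fcount_ge_convolution:
  assumes F: "vsum_closed_family F" and n: "n \<ge> 2"
  shows "(\<Sum>k=2..n. fvi F k * fcount F (n - k + 1)) \<le> fcount F n"
proof -
  let ?V = "\<lambda>k A. class_rep F vert_indec k A" and ?R = "\<lambda>k B. class_rep F (\<lambda>_. True) (n - k + 1) B"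
  let ?D = "SIGMA k:{2..n}. classes F vert_indec k \<times> classes F (\<lambda>_. True) (n - k + 1)"
  define \<Phi> where "\<Phi> = (\<lambda>(k, A, B). iso_class F (vsum_nat (?V k A) (?R k B)))"
  have reps: "?V k A \<in> F" "card (fst (?V k A)) = k" "vert_indec (?V k A)" "fin_lattice (?V k A)"
      "iso_class F (?V k A) = A" "?R k B \<in> F" "card (fst (?R k B)) = n - k + 1"
      "fin_lattice (?R k B)" "iso_class F (?R k B) = B"
    if "(k, A, B) \<in> ?D" for k A B
    using that class_rep[of A F vert_indec k] class_rep[of B F "\<lambda>_. True" "n - k + 1"]
      vsum_closed_family_fin_lattice[OF F] by auto
  have "\<Phi> (k, A, B) \<in> classes F (\<lambda>_. True) n" if kAB: "(k, A, B) \<in> ?D" for k A B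
  proof -
    have "card (fst (vsum_nat (?V k A) (?R k B))) = n"
      using kAB reps[OF kAB] by (simp add: card_vsum_nat)
    then show ?thesis
      unfolding classes_def \<Phi>_def using vsum_nat_mem_family[OF F] reps[OF kAB] by auto
  qed
  then have img: "\<Phi> ` ?D \<subseteq> classes F (\<lambda>_. True) n" by auto
  have "inj_on \<Phi> ?D"
  proof (rule inj_onI)
    fix a b assume a: "a \<in> ?D" and b: "b \<in> ?D" and eq_ab: "\<Phi> a = \<Phi> b"
    obtain k A B k' A' B' where ab: "a = (k, A, B)" "b = (k', A', B')" by (metis prod_cases3)
    note kAB = a[unfolded ab] and kAB' = b[unfolded ab] and eq = eq_ab[unfolded ab]
    note r = reps[OF kAB] and r' = reps[OF kAB']
    have "card (fst (?V k A)) \<ge> 2" "card (fst (?V k' A')) \<ge> 2"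
      using r(2) r'(2) kAB kAB' by auto
    with eq have isoV: "lat_iso (?V k A) (?V k' A')" and isoR: "lat_iso (?R k B) (?R k' B')"
      using iso_class_vsum_nat_cancel[OF F r(1,3) _ r(6) r'(1,3) _ r'(6)] unfolding \<Phi>_def by simp_all
    have "k = k'" using lat_iso_card[OF isoV] r(2) r'(2) by simp
    moreover have "A = A'" using iso_class_eq_iff[OF r'(1)] isoV r(5) r'(5) by blast
    moreover have "B = B'" using iso_class_eq_iff[OF r'(6)] isoR r(9) r'(9) by blast
    ultimately show "a = b" using ab by simp
  qed
  then have "card ?D \<le> card (classes F (\<lambda>_. True) n)"
    using card_inj_on_le[OF _ img finite_classes[OF F]] by blast
  then show ?thesis
    using finite_classes[OF F] by (simp add: card_cartesian_product fvi_def fcount_def count_classes_eq_card)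
qed

lemma fcount_one_pos:
  assumes F: "vsum_closed_family F"
  shows "fcount F 1 \<ge> 1"
proof -
  have "classes F (\<lambda>_. True) 1 \<noteq> {}"
    using vsum_closed_family_singleton[OF F] unfolding classes_def by blast
  then show ?thesis
    using finite_classes[OF F] by (simp add: fcount_def count_classes_eq_card Suc_le_eq card_gt_0_iff)
qed

section \<open>The lower sequence\<close>

lemma subsolution_le_supersolution:
  fixes a g u :: "nat \<Rightarrow> nat"
  assumes "u 1 \<le> g 1"
    and sub: "\<And>n. 2 \<le> n \<Longrightarrow> u n \<le> (\<Sum>k=2..n. a k * u (n - k + 1))"
    and super: "\<And>n. 2 \<le> n \<Longrightarrow> (\<Sum>k=2..n. a k * g (n - k + 1)) \<le> g n"
  shows "1 \<le> n \<Longrightarrow> u n \<le> g n"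
proof (induction n rule: less_induct)
  case (less n)
  show ?case
  proof (cases "n = 1")
    case True
    then show ?thesis using assms(1) by simp
  next
    case False
    with less.prems have n: "2 \<le> n" by simp
    have "u n \<le> (\<Sum>k=2..n. a k * u (n - k + 1))" using sub[OF n] .
    also have "\<dots> \<le> (\<Sum>k=2..n. a k * g (n - k + 1))"
      by (intro sum_mono mult_le_mono2 less.IH) auto
    also have "\<dots> \<le> g n" using super[OF n] .
    finally show ?thesis .
  qed
qed

lemma sum_from_two_reindex:
  fixes a g :: "nat \<Rightarrow> nat"
  assumes "2 \<le> N" "N \<le> n"
  shows "(\<Sum>k=2..N. a k * g (n - k + 1)) = (\<Sum>j=1..N-1. a (j + 1) * g (n - j))"
proof -
  have "{2..N} = {Suc 1..Suc (N - 1)}" using assms(1) by simp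
  then have "(\<Sum>k=2..N. a k * g (n - k + 1)) = (\<Sum>j=1..N-1. a (Suc j) * g (n - Suc j + 1))"
    by (simp only: sum.shift_bounds_cl_Suc_ivl)
  also have "\<dots> = (\<Sum>j=1..N-1. a (j + 1) * g (n - j))"
  proof (intro sum.cong refl)
    fix j assume "j \<in> {1..N-1}"
    then have "n - Suc j + 1 = n - j" using assms by auto
    then show "a (Suc j) * g (n - Suc j + 1) = a (j + 1) * g (n - j)" by simp
  qed
  finally show ?thesis .
qed

theorem theorem2p6:
  fixes F :: "nat ord_str set" and N :: nat and fl :: "nat \<Rightarrow> nat"
  assumes "vsum_closed_family F"
    and "N \<ge> 2"
    and "fl 1 = 1"
    and "\<And>n. 2 \<le> n \<Longrightarrow> n \<le> N \<Longrightarrow> fl n = (\<Sum>k=2..n. fvi F k * fl (n - k + 1))"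
    and "\<And>n. N + 1 \<le> n \<Longrightarrow> fl n = (\<Sum>k=2..N. fvi F k * fl (n - k + 1))"
  shows "(\<forall>n\<ge>1. fcount F n \<ge> fl n) \<and>
         (\<forall>n\<ge>N. fl n = (\<Sum>j=1..N-1. fvi F (j + 1) * fl (n - j)))"
proof (intro conjI allI impI)
  have fl_sub: "fl n \<le> (\<Sum>k=2..n. fvi F k * fl (n - k + 1))" if "2 \<le> n" for n
  proof (cases "n \<le> N")
    case False
    then have "fl n = (\<Sum>k=2..N. fvi F k * fl (n - k + 1))" using assms(5) by simp
    also have "\<dots> \<le> (\<Sum>k=2..n. fvi F k * fl (n - k + 1))"
      using False by (intro sum_mono2) auto
    finally show ?thesis .
  qed (use assms(4) that in simp)
  have "fl 1 \<le> fcount F 1" using assms(3) fcount_one_pos[OF assms(1)] by simp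
  then show "fl n \<le> fcount F n" if "1 \<le> n" for n
    using subsolution_le_supersolution[OF _ fl_sub fcount_ge_convolution[OF assms(1)]] that
    by simp
next
  fix n assume "N \<le> n"
  then have "fl n = (\<Sum>k=2..N. fvi F k * fl (n - k + 1))"
    using assms(2,4,5) by (cases "n = N") auto
  then show "fl n = (\<Sum>j=1..N-1. fvi F (j + 1) * fl (n - j))"
    using sum_from_two_reindex[OF assms(2) \<open>N \<le> n\<close>] by simp
qed

end
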